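(* Let $\Omega$ be a monoid, $A$ an associative algebra, $M$ an $A$-bimodule, $H$ a Hochschild $2$-cocycle, and $T=\{T_\alpha\}_{\alpha\in\Omega}$ an $H$-twisted $\mathcal{O}$-operator family. Let $T^t = \sum_{i\ge 0} t^i T^{(i)}$ be a formal one-parameter deformation of $T$. Then the infinitesimal $T^{(1)}=\{T^{(1)}_\alpha\}_{\alpha\in\Omega}\in C^1_{\mathrm{TwOoperf}}(M,A)$ is a $1$-cocycle, i.e. $\delta_{\mathrm{TwOoperf}}(T^{(1)})=0$. Moreover, if $\overline{T}^t$ is a formal one-parameter deformation equivalent to $T^t$, then $T^{(1)}$ and $\overline{T}^{(1)}$ define the same class in $H^1_{\mathrm{TwOoperf}}(M,A)$.
   Context: $\Omega$ is a semigroup with unit $1$, algebras over a field $\mathbf{k}$ of characteristic $0$. Hochschild $2$-cocycle: bilinear $H:A^{\otimes 2}\to M$ with $a \cdot H (b, c) - H ( a \cdot b, c)+ H (a, b \cdot c) - H (a, b) \cdot c =0$. $H$-twisted $\mathcal{O}$-operator family: linear maps $T_\alpha: M\to A$ with $T_\alpha (u) \cdot T_\beta (v) = T_{\alpha \beta} ( T_\alpha (u) \cdot v + u \cdot T_\beta (v) + H (T_\alpha (u), T_\beta (v)))$. Cochains: $C^0_{\mathrm{TwOoperf}}(M,A)=A$, $C^n_{\mathrm{TwOoperf}}(M,A)$ ($n\ge1$) = families $f=\{f_{\alpha_1,\dots,\alpha_n}:M^{\otimes n}\to A\}_{\alpha_i\in\Omega}$ of multilinear maps. In low degrees the differential is: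 for $a\in A$, $(\delta a)_\alpha(u)= T_\alpha (u) \cdot a - T_\alpha (u \cdot a) - T_\alpha (H (T_\alpha u, a)) - a \cdot T_\alpha (u) + T_\alpha (a \cdot u) + T_\alpha (H (a, T_\alpha u))$; for $f\in C^1$, $(\delta f)_{\alpha_1,\alpha_2}(u_1,u_2)= T_{\alpha_1}(u_1)\cdot f_{\alpha_2}(u_2) - T_{\alpha_1\alpha_2}(u_1\cdot f_{\alpha_2}(u_2)) - T_{\alpha_1\alpha_2}(H(T_{\alpha_1}u_1, f_{\alpha_2}(u_2))) - f_{\alpha_1\alpha_2}\big(T_{\alpha_1}(u_1)\cdot u_2 + u_1\cdot T_{\alpha_2}(u_2) + H(T_{\alpha_1}u_1,T_{\alpha_2}u_2)\big) + f_{\alpha_1}(u_1)\cdot T_{\alpha_2}(u_2) - T_{\alpha_1\alpha_2}(f_{\alpha_1}(u_1)\cdot u_2) - T_{\alpha_1\alpha_2}(H(f_{\alpha_1}(u_1),T_{\alpha_2}u_2))$. (This is the Hochschild-type complex of the $\Omega$-associative algebra $(M,\{u\ast_{\alpha,\beta}v = T_\alpha u\cdot v+u\cdot T_\beta v+H(T_\alpha u,T_\beta v)\})$ with coefficients in $A$, with $\delta^2=0$.) $H^1_{\mathrm{TwOoperf}}(M,A)=\ker(\delta|_{C^1})/\delta(C^0)$. A formal one-parameter deformation of $T$ is a formal sum $T^t=\sum_{i\ge0}t^iT^{(i)}$, $T^{(i)}=\{T^{(i)}_\alpha:M\to A\}_{\alpha\in\Omega}$, $T^{(0)}=T$, such that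 the $\mathbf{k}[[t]]$-linear extensions $T^t_\alpha: M[[t]]\to A[[t]]$ form an $H$-twisted $\mathcal{O}$-operator family (with $H$ extended $\mathbf{k}[[t]]$-bilinearly): $T^t_\alpha (u) \cdot T^t_\beta (v) = T^t_{\alpha \beta} ( T^t_\alpha (u) \cdot v + u \cdot T^t_\beta (v) + H (T^t_\alpha (u), T^t_\beta (v)))$. Two deformations $T^t,\overline{T}^t$ are equivalent if there are $\theta\in A$, linear maps $\phi_i:A\to A$ and $\psi_i:M\to M$ ($i\ge2$) such that $\phi^t = \mathrm{id}_A + t (l^{\mathrm{ad}}_\theta - r^{\mathrm{ad}}_\theta) + \sum_{i\ge2} t^i \phi_i$ and $\psi^t_\alpha = \mathrm{id}_M + t (l_\theta - r_\theta + H (\theta, T_\alpha -) - H (T_\alpha -, \theta) ) + \sum_{i\ge 2} t^i \psi_i$ satisfy $\phi^t \circ T^t_\alpha = \overline{T}^t_\alpha \circ \psi^t_\alpha$ for all $\alpha$; here $l^{\mathrm{ad}}_\theta(a)=\theta\cdot a$, $r^{\mathrm{ad}}_\theta(a)=a\cdot\theta$, $l_\theta(u)=\theta\cdot u$, $r_\theta(u)=u\cdot\theta$. *)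

theory Defs
  imports Main
begin

text \<open>Scalars: a field 'k of characteristic 0.  The algebra A is a type 'a of class ring
  (associative, not necessarily unital) together with a scalar multiplication sA making it a
  'k-algebra.  The bimodule M is a type 'm (abelian group) with scalar multiplication sM,
  left action l (a.u) and right action r (u.a).\<close>

definition k_module :: "('k::field \<Rightarrow> 'v::ab_group_add \<Rightarrow> 'v) \<Rightarrow> bool" where
  "k_module s \<longleftrightarrow>
     (\<forall>c x y. s c (x + y) = s c x + s c y) \<and>
     (\<forall>c d x. s (c + d) x = s c x + s d x) \<and>
     (\<forall>c d x. s (c * d) x = s c (s d x)) \<and>
     (\<forall>x. s 1 x = x)"

definition k_algebra :: "('k::field \<Rightarrow> 'a::ring \<Rightarrow> 'a) \<Rightarrow> bool" where
  "k_algebra sA \<longleftrightarrow> k_module sA \<and>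
     (\<forall>c x y. sA c (x * y) = sA c x * y) \<and>
     (\<forall>c x y. sA c (x * y) = x * sA c y)"

definition k_bimodule ::
  "('k::field \<Rightarrow> 'a::ring \<Rightarrow> 'a) \<Rightarrow> ('k \<Rightarrow> 'm::ab_group_add \<Rightarrow> 'm)
   \<Rightarrow> ('a \<Rightarrow> 'm \<Rightarrow> 'm) \<Rightarrow> ('m \<Rightarrow> 'a \<Rightarrow> 'm) \<Rightarrow> bool" where
  "k_bimodule sA sM l r \<longleftrightarrow> k_module sM \<and>
     (\<forall>a b u. l (a + b) u = l a u + l b u) \<and>
     (\<forall>a u v. l a (u + v) = l a u + l a v) \<and>
     (\<forall>c a u. l (sA c a) u = sM c (l a u)) \<and>
     (\<forall>c a u. l a (sM c u) = sM c (l a u)) \<and>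
     (\<forall>u a b. r u (a + b) = r u a + r u b) \<and>
     (\<forall>u v a. r (u + v) a = r u a + r v a) \<and>
     (\<forall>c u a. r u (sA c a) = sM c (r u a)) \<and>
     (\<forall>c u a. r (sM c u) a = sM c (r u a)) \<and>
     (\<forall>a b u. l (a * b) u = l a (l b u)) \<and>
     (\<forall>u a b. r u (a * b) = r (r u a) b) \<and>
     (\<forall>a u b. r (l a u) b = l a (r u b))"

definition k_linear :: "('k \<Rightarrow> 'v \<Rightarrow> 'v) \<Rightarrow> ('k \<Rightarrow> 'w \<Rightarrow> 'w)
    \<Rightarrow> ('v::ab_group_add \<Rightarrow> 'w::ab_group_add) \<Rightarrow> bool" where
  "k_linear s1 s2 f \<longleftrightarrow> (\<forall>x y. f (x + y) = f x + f y) \<and> (\<forall>c x. f (s1 c x) = s2 c (f x))"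

definition k_bilinear :: "('k \<Rightarrow> 'a \<Rightarrow> 'a) \<Rightarrow> ('k \<Rightarrow> 'm \<Rightarrow> 'm)
    \<Rightarrow> ('a::ab_group_add \<Rightarrow> 'a \<Rightarrow> 'm::ab_group_add) \<Rightarrow> bool" where
  "k_bilinear sA sM H \<longleftrightarrow> (\<forall>a. k_linear sA sM (H a)) \<and> (\<forall>b. k_linear sA sM (\<lambda>a. H a b))"

definition hochschild_2cocycle ::
  "('k \<Rightarrow> 'a::ring \<Rightarrow> 'a) \<Rightarrow> ('k \<Rightarrow> 'm::ab_group_add \<Rightarrow> 'm)
   \<Rightarrow> ('a \<Rightarrow> 'm \<Rightarrow> 'm) \<Rightarrow> ('m \<Rightarrow> 'a \<Rightarrow> 'm) \<Rightarrow> ('a \<Rightarrow> 'a \<Rightarrow> 'm) \<Rightarrow> bool" where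
  "hochschild_2cocycle sA sM l r H \<longleftrightarrow> k_bilinear sA sM H \<and>
     (\<forall>a b c. l a (H b c) - H (a * b) c + H a (b * c) - r (H a b) c = 0)"

definition twisted_O_family ::
  "('k \<Rightarrow> 'a::ring \<Rightarrow> 'a) \<Rightarrow> ('k \<Rightarrow> 'm::ab_group_add \<Rightarrow> 'm)
   \<Rightarrow> ('a \<Rightarrow> 'm \<Rightarrow> 'm) \<Rightarrow> ('m \<Rightarrow> 'a \<Rightarrow> 'm) \<Rightarrow> ('a \<Rightarrow> 'a \<Rightarrow> 'm)
   \<Rightarrow> ('w::monoid_mult \<Rightarrow> 'm \<Rightarrow> 'a) \<Rightarrow> bool" where
  "twisted_O_family sA sM l r H T \<longleftrightarrow> (\<forall>\<alpha>. k_linear sM sA (T \<alpha>)) \<and>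
     (\<forall>\<alpha> \<beta> u v. T \<alpha> u * T \<beta> v = T (\<alpha> * \<beta>) (l (T \<alpha> u) v + r u (T \<beta> v) + H (T \<alpha> u) (T \<beta> v)))"

text \<open>Formal deformations: Td i is the coefficient T^(i) of t^i.  The defining identity of the
  k[[t]]-linear extension is written coefficientwise: the t^m coefficient of the element
  T^t_alpha(u).v + u.T^t_beta(v) + H(T^t_alpha u, T^t_beta v) of M[[t]] is def_arg, and the
  coefficient of t^n of both sides (Cauchy products) must agree.\<close>
definition def_arg ::
  "('a::ring \<Rightarrow> 'm::ab_group_add \<Rightarrow> 'm) \<Rightarrow> ('m \<Rightarrow> 'a \<Rightarrow> 'm) \<Rightarrow> ('a \<Rightarrow> 'a \<Rightarrow> 'm)
   \<Rightarrow> (nat \<Rightarrow> 'w \<Rightarrow> 'm \<Rightarrow> 'a) \<Rightarrow> 'w \<Rightarrow> 'w \<Rightarrow> 'm \<Rightarrow> 'm \<Rightarrow> nat \<Rightarrow> 'm" where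
  "def_arg l r H Td \<alpha> \<beta> u v m =
     l (Td m \<alpha> u) v + r u (Td m \<beta> v) + (\<Sum>j\<le>m. H (Td j \<alpha> u) (Td (m - j) \<beta> v))"

definition formal_deformation ::
  "('k \<Rightarrow> 'a::ring \<Rightarrow> 'a) \<Rightarrow> ('k \<Rightarrow> 'm::ab_group_add \<Rightarrow> 'm)
   \<Rightarrow> ('a \<Rightarrow> 'm \<Rightarrow> 'm) \<Rightarrow> ('m \<Rightarrow> 'a \<Rightarrow> 'm) \<Rightarrow> ('a \<Rightarrow> 'a \<Rightarrow> 'm)
   \<Rightarrow> ('w::monoid_mult \<Rightarrow> 'm \<Rightarrow> 'a) \<Rightarrow> (nat \<Rightarrow> 'w \<Rightarrow> 'm \<Rightarrow> 'a) \<Rightarrow> bool" where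
  "formal_deformation sA sM l r H T Td \<longleftrightarrow> Td 0 = T \<and>
     (\<forall>i \<alpha>. k_linear sM sA (Td i \<alpha>)) \<and>
     (\<forall>n \<alpha> \<beta> u v.
        (\<Sum>i\<le>n. Td i \<alpha> u * Td (n - i) \<beta> v)
        = (\<Sum>i\<le>n. Td i (\<alpha> * \<beta>) (def_arg l r H Td \<alpha> \<beta> u v (n - i))))"

definition phi_coef :: "'a::ring \<Rightarrow> (nat \<Rightarrow> 'a \<Rightarrow> 'a) \<Rightarrow> nat \<Rightarrow> 'a \<Rightarrow> 'a" where
  "phi_coef \<theta> \<phi> i = (if i = 0 then id else if i = 1 then (\<lambda>a. \<theta> * a - a * \<theta>) else \<phi> i)"

definition psi_coef ::
  "('a::ring \<Rightarrow> 'm::ab_group_add \<Rightarrow> 'm) \<Rightarrow> ('m \<Rightarrow> 'a \<Rightarrow> 'm) \<Rightarrow> ('a \<Rightarrow> 'a \<Rightarrow> 'm)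
   \<Rightarrow> ('w \<Rightarrow> 'm \<Rightarrow> 'a) \<Rightarrow> 'a \<Rightarrow> (nat \<Rightarrow> 'm \<Rightarrow> 'm) \<Rightarrow> 'w \<Rightarrow> nat \<Rightarrow> 'm \<Rightarrow> 'm" where
  "psi_coef l r H T \<theta> \<psi> \<alpha> i = (if i = 0 then id
      else if i = 1 then (\<lambda>u. l \<theta> u - r u \<theta> + H \<theta> (T \<alpha> u) - H (T \<alpha> u) \<theta>)
      else \<psi> i)"

text \<open>Equivalence of deformations: phi^t o T^t_alpha = Tbar^t_alpha o psi^t_alpha, compared
  coefficientwise (k[[t]]-linear extensions).\<close>
definition equivalent_deformations ::
  "('k \<Rightarrow> 'a::ring \<Rightarrow> 'a) \<Rightarrow> ('k \<Rightarrow> 'm::ab_group_add \<Rightarrow> 'm)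
   \<Rightarrow> ('a \<Rightarrow> 'm \<Rightarrow> 'm) \<Rightarrow> ('m \<Rightarrow> 'a \<Rightarrow> 'm) \<Rightarrow> ('a \<Rightarrow> 'a \<Rightarrow> 'm)
   \<Rightarrow> ('w \<Rightarrow> 'm \<Rightarrow> 'a) \<Rightarrow> (nat \<Rightarrow> 'w \<Rightarrow> 'm \<Rightarrow> 'a) \<Rightarrow> (nat \<Rightarrow> 'w \<Rightarrow> 'm \<Rightarrow> 'a) \<Rightarrow> bool" where
  "equivalent_deformations sA sM l r H T Td Tb \<longleftrightarrow>
     (\<exists>\<theta> \<phi> \<psi>. (\<forall>i\<ge>2. k_linear sA sA (\<phi> i)) \<and> (\<forall>i\<ge>2. k_linear sM sM (\<psi> i)) \<and>
        (\<forall>n \<alpha> u. (\<Sum>i\<le>n. phi_coef \<theta> \<phi> i (Td (n - i) \<alpha> u))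
                = (\<Sum>i\<le>n. Tb i \<alpha> (psi_coef l r H T \<theta> \<psi> \<alpha> (n - i) u))))"

definition delta0 ::
  "('a::ring \<Rightarrow> 'm::ab_group_add \<Rightarrow> 'm) \<Rightarrow> ('m \<Rightarrow> 'a \<Rightarrow> 'm) \<Rightarrow> ('a \<Rightarrow> 'a \<Rightarrow> 'm)
   \<Rightarrow> ('w \<Rightarrow> 'm \<Rightarrow> 'a) \<Rightarrow> 'a \<Rightarrow> 'w \<Rightarrow> 'm \<Rightarrow> 'a" where
  "delta0 l r H T a \<alpha> u =
     T \<alpha> u * a - T \<alpha> (r u a) - T \<alpha> (H (T \<alpha> u) a)
     - a * T \<alpha> u + T \<alpha> (l a u) + T \<alpha> (H a (T \<alpha> u))"

definition delta1 ::
  "('a::ring \<Rightarrow> 'm::ab_group_add \<Rightarrow> 'm) \<Rightarrow> ('m \<Rightarrow> 'a \<Rightarrow> 'm) \<Rightarrow> ('a \<Rightarrow> 'a \<Rightarrow> 'm)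
   \<Rightarrow> ('w::monoid_mult \<Rightarrow> 'm \<Rightarrow> 'a) \<Rightarrow> ('w \<Rightarrow> 'm \<Rightarrow> 'a) \<Rightarrow> 'w \<Rightarrow> 'w \<Rightarrow> 'm \<Rightarrow> 'm \<Rightarrow> 'a" where
  "delta1 l r H T f \<alpha>1 \<alpha>2 u1 u2 =
     T \<alpha>1 u1 * f \<alpha>2 u2 - T (\<alpha>1 * \<alpha>2) (r u1 (f \<alpha>2 u2))
     - T (\<alpha>1 * \<alpha>2) (H (T \<alpha>1 u1) (f \<alpha>2 u2))
     - f (\<alpha>1 * \<alpha>2) (l (T \<alpha>1 u1) u2 + r u1 (T \<alpha>2 u2) + H (T \<alpha>1 u1) (T \<alpha>2 u2))
     + f \<alpha>1 u1 * T \<alpha>2 u2 - T (\<alpha>1 * \<alpha>2) (l (f \<alpha>1 u1) u2)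
     - T (\<alpha>1 * \<alpha>2) (H (f \<alpha>1 u1) (T \<alpha>2 u2))"

definition is_1cocycle ::
  "('k \<Rightarrow> 'a::ring \<Rightarrow> 'a) \<Rightarrow> ('k \<Rightarrow> 'm::ab_group_add \<Rightarrow> 'm)
   \<Rightarrow> ('a \<Rightarrow> 'm \<Rightarrow> 'm) \<Rightarrow> ('m \<Rightarrow> 'a \<Rightarrow> 'm) \<Rightarrow> ('a \<Rightarrow> 'a \<Rightarrow> 'm)
   \<Rightarrow> ('w::monoid_mult \<Rightarrow> 'm \<Rightarrow> 'a) \<Rightarrow> ('w \<Rightarrow> 'm \<Rightarrow> 'a) \<Rightarrow> bool" where
  "is_1cocycle sA sM l r H T f \<longleftrightarrow> (\<forall>\<alpha>. k_linear sM sA (f \<alpha>)) \<and>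
     (\<forall>\<alpha>1 \<alpha>2 u1 u2. delta1 l r H T f \<alpha>1 \<alpha>2 u1 u2 = 0)"

definition same_H1_class ::
  "('k \<Rightarrow> 'a::ring \<Rightarrow> 'a) \<Rightarrow> ('k \<Rightarrow> 'm::ab_group_add \<Rightarrow> 'm)
   \<Rightarrow> ('a \<Rightarrow> 'm \<Rightarrow> 'm) \<Rightarrow> ('m \<Rightarrow> 'a \<Rightarrow> 'm) \<Rightarrow> ('a \<Rightarrow> 'a \<Rightarrow> 'm)
   \<Rightarrow> ('w::monoid_mult \<Rightarrow> 'm \<Rightarrow> 'a) \<Rightarrow> ('w \<Rightarrow> 'm \<Rightarrow> 'a) \<Rightarrow> ('w \<Rightarrow> 'm \<Rightarrow> 'a) \<Rightarrow> bool" where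
  "same_H1_class sA sM l r H T f g \<longleftrightarrow>
     is_1cocycle sA sM l r H T f \<and> is_1cocycle sA sM l r H T g \<and>
     (\<exists>a. \<forall>\<alpha> u. f \<alpha> u - g \<alpha> u = delta0 l r H T a \<alpha> u)"

end

theory Submission
  imports Defs HOL.Modules
begin

text \<open>Both claims are read off the coefficient of t alone.  Since T^(0) = T, the
  t-coefficient of the deformation equation for T^t is exactly \<delta>(T^(1)) = 0, and the
  t-coefficient of \<phi>^t \<circ> T^t_\<alpha> = Tbar^t_\<alpha> \<circ> \<psi>^t_\<alpha> is T^(1) - Tbar^(1) = \<delta>\<theta>.\<close>

lemma k_linear_diff:
  assumes "k_linear s1 s2 f"
  shows "f (x - y) = f x - f y"
  using assms by (intro additive.diff) (simp add: additive_def k_linear_def)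

lemma formal_deformation_coeff_1:
  assumes "formal_deformation sA sM l r H T Td"
  shows "T \<alpha> u * Td 1 \<beta> v + Td 1 \<alpha> u * T \<beta> v
    = T (\<alpha> * \<beta>) (l (Td 1 \<alpha> u) v + r u (Td 1 \<beta> v)
        + (H (T \<alpha> u) (Td 1 \<beta> v) + H (Td 1 \<alpha> u) (T \<beta> v)))
      + Td 1 (\<alpha> * \<beta>) (l (T \<alpha> u) v + r u (T \<beta> v) + H (T \<alpha> u) (T \<beta> v))"
proof -
  have "Td 0 = T"
    and "(\<Sum>i\<le>Suc 0. Td i \<alpha> u * Td (Suc 0 - i) \<beta> v)
       = (\<Sum>i\<le>Suc 0. Td i (\<alpha> * \<beta>) (def_arg l r H Td \<alpha> \<beta> u v (Suc 0 - i)))"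
    using assms unfolding formal_deformation_def by blast+
  then show ?thesis by (simp add: def_arg_def)
qed

lemma formal_deformation_infinitesimal_is_1cocycle:
  assumes fd: "formal_deformation sA sM l r H T Td"
  shows "is_1cocycle sA sM l r H T (Td 1)"
  unfolding is_1cocycle_def
proof (intro conjI allI)
  have "Td 0 = T" and lin: "\<And>i \<alpha>. k_linear sM sA (Td i \<alpha>)"
    using fd by (auto simp: formal_deformation_def)
  then have T_add: "T \<alpha> (x + y) = T \<alpha> x + T \<alpha> y" for \<alpha> x y
    by (metis k_linear_def)
  fix \<alpha>1 \<alpha>2 u1 u2
  show "k_linear sM sA (Td 1 \<alpha>1)" by (rule lin)
  show "delta1 l r H T (Td 1) \<alpha>1 \<alpha>2 u1 u2 = 0"
    using formal_deformation_coeff_1[OF fd, of \<alpha>1 u1 \<alpha>2 u2]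
    unfolding delta1_def by (simp add: T_add algebra_simps)
qed

lemma equivalent_deformations_coeff_1:
  assumes "Td 0 = T" and "Tb 0 = T"
    and "equivalent_deformations sA sM l r H T Td Tb"
  obtains \<theta> where "\<And>\<alpha> u. Td 1 \<alpha> u + (\<theta> * T \<alpha> u - T \<alpha> u * \<theta>)
    = T \<alpha> (l \<theta> u - r u \<theta> + H \<theta> (T \<alpha> u) - H (T \<alpha> u) \<theta>) + Tb 1 \<alpha> u"
proof -
  obtain \<theta> \<phi> \<psi> where eq: "\<And>n \<alpha> u. (\<Sum>i\<le>n. phi_coef \<theta> \<phi> i (Td (n - i) \<alpha> u))
      = (\<Sum>i\<le>n. Tb i \<alpha> (psi_coef l r H T \<theta> \<psi> \<alpha> (n - i) u))"
    using assms(3) unfolding equivalent_deformations_def by blast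
  show thesis
  proof
    fix \<alpha> u
    show "Td 1 \<alpha> u + (\<theta> * T \<alpha> u - T \<alpha> u * \<theta>)
      = T \<alpha> (l \<theta> u - r u \<theta> + H \<theta> (T \<alpha> u) - H (T \<alpha> u) \<theta>) + Tb 1 \<alpha> u"
      using eq[of "Suc 0" \<alpha> u] assms(1,2) by (simp add: phi_coef_def psi_coef_def)
  qed
qed

lemma equivalent_deformations_infinitesimals_differ_by_coboundary:
  assumes fd: "formal_deformation sA sM l r H T Td"
    and fb: "formal_deformation sA sM l r H T Tb"
    and eqv: "equivalent_deformations sA sM l r H T Td Tb"
  shows "\<exists>\<theta>. \<forall>\<alpha> u. Td 1 \<alpha> u - Tb 1 \<alpha> u = delta0 l r H T \<theta> \<alpha> u"
proof -
  have T0: "Td 0 = T" "Tb 0 = T" and lin: "\<And>\<alpha>. k_linear sM sA (T \<alpha>)"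
    using fd fb by (auto simp: formal_deformation_def)
  then have T_add: "T \<alpha> (x + y) = T \<alpha> x + T \<alpha> y" for \<alpha> x y
    by (simp add: k_linear_def)
  obtain \<theta> where coeff_1: "\<And>\<alpha> u. Td 1 \<alpha> u + (\<theta> * T \<alpha> u - T \<alpha> u * \<theta>)
      = T \<alpha> (l \<theta> u - r u \<theta> + H \<theta> (T \<alpha> u) - H (T \<alpha> u) \<theta>) + Tb 1 \<alpha> u"
    using equivalent_deformations_coeff_1[OF T0 eqv] by blast
  have "Td 1 \<alpha> u - Tb 1 \<alpha> u = delta0 l r H T \<theta> \<alpha> u" for \<alpha> u
    using coeff_1[of \<alpha> u] unfolding delta0_def
    by (simp add: T_add k_linear_diff[OF lin] algebra_simps)
  then show ?thesis by blast
qed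

theorem theorem4p7:
  fixes sA :: "'k::field_char_0 \<Rightarrow> 'a::ring \<Rightarrow> 'a"
    and sM :: "'k \<Rightarrow> 'm::ab_group_add \<Rightarrow> 'm"
    and l :: "'a \<Rightarrow> 'm \<Rightarrow> 'm" and r :: "'m \<Rightarrow> 'a \<Rightarrow> 'm"
    and H :: "'a \<Rightarrow> 'a \<Rightarrow> 'm"
    and T :: "'w::monoid_mult \<Rightarrow> 'm \<Rightarrow> 'a"
    and Td :: "nat \<Rightarrow> 'w \<Rightarrow> 'm \<Rightarrow> 'a"
  assumes "k_algebra sA"
    and "k_bimodule sA sM l r"
    and "hochschild_2cocycle sA sM l r H"
    and "twisted_O_family sA sM l r H T"
    and "formal_deformation sA sM l r H T Td"
  shows "is_1cocycle sA sM l r H T (Td 1)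
    \<and> (\<forall>Tb. formal_deformation sA sM l r H T Tb
           \<and> equivalent_deformations sA sM l r H T Td Tb
           \<longrightarrow> same_H1_class sA sM l r H T (Td 1) (Tb 1))"
proof (intro conjI allI impI)
  show "is_1cocycle sA sM l r H T (Td 1)"
    using assms(5) by (rule formal_deformation_infinitesimal_is_1cocycle)
  fix Tb
  assume "formal_deformation sA sM l r H T Tb \<and> equivalent_deformations sA sM l r H T Td Tb"
  with assms(5) show "same_H1_class sA sM l r H T (Td 1) (Tb 1)"
    unfolding same_H1_class_def
    by (blast intro: formal_deformation_infinitesimal_is_1cocycle
        equivalent_deformations_infinitesimals_differ_by_coboundary)
qed

end
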